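(* Let $M=D-A$ be an $n\times n$ SDDM matrix, where $D=\mathrm{diag}(d_1,\dots,d_n)$ is its diagonal, and let $\kappa=\max\{2,\kappa(D-A)\}$. Let $c=(1-1/\kappa)/\max_i d_i$. Then all eigenvalues of $c(D-A)$ lie in $[\frac{1}{2\kappa},2-\frac{1}{2\kappa}]$. Moreover, writing $c(D-A)=I-X$ with $X=I-c(D-A)$, all entries of $X$ are nonnegative and $\rho(X)\le 1-\frac{1}{2\kappa}$.
   Context: SDDM matrix: symmetric, positive definite, with nonpositive off-diagonal entries and $m_{ii}>\sum_{j\neq i}|m_{ij}|$ for all $i$. $\kappa(\cdot)$ is the condition number (ratio of largest to smallest singular value), and $\rho(\cdot)$ is the spectral radius. *)

theory Defs
  imports "Jordan_Normal_Form.Spectral_Radius"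
begin

definition SDDM :: "nat \<Rightarrow> real mat \<Rightarrow> bool" where
  "SDDM n M \<longleftrightarrow> M \<in> carrier_mat n n \<and> M\<^sup>T = M
     \<and> (\<forall>v \<in> carrier_vec n. v \<noteq> 0\<^sub>v n \<longrightarrow> v \<bullet> (M *\<^sub>v v) > 0)
     \<and> (\<forall>i<n. \<forall>j<n. i \<noteq> j \<longrightarrow> M $$ (i,j) \<le> 0)
     \<and> (\<forall>i<n. M $$ (i,i) > (\<Sum>j\<in>{0..<n} - {i}. \<bar>M $$ (i,j)\<bar>))"

definition singular_values :: "real mat \<Rightarrow> real set" where
  "singular_values A = sqrt ` {k. eigenvalue (A\<^sup>T * A) k}"

definition cond_num :: "real mat \<Rightarrow> real" where
  "cond_num A = Max (singular_values A) / Min (singular_values A)"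

end

theory Submission
  imports Defs
begin

text \<open>
  By definiteness and Gershgorin's theorem every eigenvalue \<lambda> of an SDDM matrix M lies in
  (0, 2 max d_i). Since M is symmetric positive definite, its eigenvalues are among its
  singular values, all of which are positive; hence \<kappa> \<lambda> \<ge> \<lambda>_max \<ge> max d_i, the last step
  because the spectral radius of a real symmetric matrix dominates its diagonal entries.
  That fact is proved without the spectral theorem: if \<rho>(A) < t < |a_ii|, the powers of A/t
  stay bounded, whereas symmetry gives (A^(2m))_ii = \<Sum>_l ((A^m)_il)^2 \<ge> ((A^m)_ii)^2 and hence
  |(A^(2^j))_ii| \<ge> |a_ii|^(2^j). Scaling by c gives the interval for c M, and X = I - c M has
  the eigenvalues 1 - c \<lambda>. Complex eigenvalues of these symmetric matrices are real, so all
  eigenvalue statements reduce to real ones.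
\<close>

lemma transpose_smult_mat: "(c \<cdot>\<^sub>m A)\<^sup>T = c \<cdot>\<^sub>m A\<^sup>T"
  by (intro eq_matI) auto

lemma pow_mat_add:
  assumes A: "A \<in> carrier_mat n n"
  shows "A ^\<^sub>m (k + l) = A ^\<^sub>m k * A ^\<^sub>m l"
proof (induction l)
  case 0
  show ?case using A by simp
next
  case (Suc l)
  then show ?case using A by (simp add: assoc_mult_mat[of _ n n _ n _ n])
qed

lemma symmetric_pow_mat:
  fixes A :: "'a::comm_semiring_1 mat"
  assumes A: "A \<in> carrier_mat n n" and sym_A: "A\<^sup>T = A"
  shows "(A ^\<^sub>m k)\<^sup>T = A ^\<^sub>m k"
proof (induction k)
  case 0
  show ?case by simp
next
  case (Suc k)
  have "(A ^\<^sub>m Suc k)\<^sup>T = A * A ^\<^sub>m k"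
    using A Suc.IH sym_A by (simp add: transpose_mult[OF pow_carrier_mat[OF A] A])
  also have "\<dots> = A ^\<^sub>m (1 + k)"
    using pow_mat_add[OF A, of 1 k] A by simp
  finally show ?case by simp
qed

lemma eigenvalue_smult_mat_iff:
  fixes A :: "'a::field mat"
  assumes A: "A \<in> carrier_mat n n" and c: "c \<noteq> 0"
  shows "eigenvalue (c \<cdot>\<^sub>m A) k \<longleftrightarrow> eigenvalue A (k / c)"
proof -
  have "(c \<cdot>\<^sub>m A) *\<^sub>v v = k \<cdot>\<^sub>v v \<longleftrightarrow> A *\<^sub>v v = (k / c) \<cdot>\<^sub>v v" if "v \<in> carrier_vec n" for v
    using A that c by (auto simp: vec_eq_iff field_simps)
  then show ?thesis
    using A unfolding eigenvalue_def eigenvector_def by auto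
qed

lemma eigenvalue_one_minus_mat_iff:
  fixes A :: "'a::field mat"
  assumes A: "A \<in> carrier_mat n n"
  shows "eigenvalue (1\<^sub>m n - A) k \<longleftrightarrow> eigenvalue A (1 - k)"
proof -
  have "(1\<^sub>m n - A) *\<^sub>v v = k \<cdot>\<^sub>v v \<longleftrightarrow> A *\<^sub>v v = (1 - k) \<cdot>\<^sub>v v" if v: "v \<in> carrier_vec n" for v
  proof -
    have eq: "(1\<^sub>m n - A) *\<^sub>v v = v - A *\<^sub>v v"
      using A v by (simp add: minus_mult_distrib_mat_vec[OF one_carrier_mat A v])
    show ?thesis
      unfolding eq using A v by (auto simp: vec_eq_iff algebra_simps)
  qed
  then show ?thesis
    using A unfolding eigenvalue_def eigenvector_def by auto
qed

lemma eigenvalue_square: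
  assumes M: "M \<in> carrier_mat n n" and ev: "eigenvalue M x"
  shows "eigenvalue (M * M) (x\<^sup>2)"
proof -
  obtain v where v: "eigenvector M v x"
    using ev unfolding eigenvalue_def by blast
  have "(M * M) *\<^sub>v v = x\<^sup>2 \<cdot>\<^sub>v v"
    using eigenvector_pow[OF M v, of 2] M by (simp add: numeral_2_eq_2)
  then show ?thesis
    using v M unfolding eigenvalue_def eigenvector_def by auto
qed

lemma eigenvalue_map_mat_of_real_iff:
  fixes A :: "real mat"
  assumes A: "A \<in> carrier_mat n n"
  shows "eigenvalue (map_mat complex_of_real A) (complex_of_real x) \<longleftrightarrow> eigenvalue A x"
  using A by (simp add: eigenvalue_root_char_poly of_real_hom.char_poly_hom)

lemma symmetric_complexified_eigenvalue_real:
  fixes A :: "real mat"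
  assumes A: "A \<in> carrier_mat n n" and sym_A: "A\<^sup>T = A"
    and ev: "eigenvalue (map_mat complex_of_real A) k"
  shows "k = complex_of_real (Re k)"
proof -
  define B where "B = map_mat complex_of_real A"
  have B: "B \<in> carrier_mat n n" and BT: "B\<^sup>T = B"
    unfolding B_def using A sym_A by (auto simp: map_mat_transpose)
  obtain v where v: "v \<in> carrier_vec n" "v \<noteq> 0\<^sub>v n" and Bv: "B *\<^sub>v v = k \<cdot>\<^sub>v v"
    using ev B unfolding B_def eigenvalue_def eigenvector_def by auto
  have conj_Bv: "conjugate (B *\<^sub>v v) = B *\<^sub>v conjugate v"
    using A v unfolding B_def by (auto simp: vec_eq_iff scalar_prod_def sum_conjugate)
  have "k * (v \<bullet>c v) = (B\<^sup>T *\<^sub>v v) \<bullet>c v"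
    using v(1) by (simp add: BT Bv)
  also have "\<dots> = v \<bullet> (B *\<^sub>v conjugate v)"
    using B v(1) by (simp add: transpose_vec_mult_scalar)
  also have "\<dots> = cnj k * (v \<bullet>c v)"
    using v(1) by (simp flip: conj_Bv add: Bv conjugate_smult_vec)
  finally have "k = cnj k"
    using v by simp
  then show ?thesis by (simp add: complex_eq_iff)
qed

lemma symmetric_complexified_eigenvalue_mem:
  fixes A :: "real mat"
  assumes A: "A \<in> carrier_mat n n" and sym_A: "A\<^sup>T = A"
    and S: "\<And>x. eigenvalue A x \<Longrightarrow> x \<in> S"
    and ev: "eigenvalue (map_mat complex_of_real A) k"
  shows "k \<in> complex_of_real ` S"
proof -
  have k: "k = complex_of_real (Re k)"
    using symmetric_complexified_eigenvalue_real[OF A sym_A ev] .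
  then have "eigenvalue A (Re k)"
    using ev eigenvalue_map_mat_of_real_iff[OF A] by metis
  then show ?thesis
    using S k by blast
qed

lemma spectral_radius_attained:
  assumes "A \<in> carrier_mat n n" and "n > 0"
  shows "\<exists>k. eigenvalue A k \<and> spectral_radius A = cmod k"
  using spectral_radius_mem_max(1)[OF assms] unfolding spectrum_def by auto

lemma spectral_radius_smult_le:
  fixes A :: "complex mat"
  assumes A: "A \<in> carrier_mat n n" and n: "n > 0" and c: "c \<noteq> 0"
  shows "spectral_radius (c \<cdot>\<^sub>m A) \<le> cmod c * spectral_radius A"
proof -
  obtain k where k: "eigenvalue (c \<cdot>\<^sub>m A) k" "spectral_radius (c \<cdot>\<^sub>m A) = cmod k"
    using spectral_radius_attained[of "c \<cdot>\<^sub>m A" n] A n by auto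
  have "eigenvalue A (k / c)"
    using k(1) eigenvalue_smult_mat_iff[OF A c] by simp
  then have "cmod (k / c) \<le> spectral_radius A"
    using spectral_radius_mem_max(2)[OF A n] unfolding spectrum_def by auto
  then show ?thesis
    using k(2) c by (simp add: norm_divide divide_le_eq mult.commute)
qed

lemma symmetric_spectral_radius_le:
  fixes A :: "real mat"
  assumes A: "A \<in> carrier_mat n n" and sym_A: "A\<^sup>T = A" and n: "n > 0"
    and r: "\<And>x. eigenvalue A x \<Longrightarrow> \<bar>x\<bar> \<le> r"
  shows "spectral_radius (map_mat complex_of_real A) \<le> r"
proof -
  obtain k where k: "eigenvalue (map_mat complex_of_real A) k"
    "spectral_radius (map_mat complex_of_real A) = cmod k"
    using spectral_radius_attained[of "map_mat complex_of_real A" n] A n by auto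
  have "k \<in> complex_of_real ` {x. \<bar>x\<bar> \<le> r}"
    using symmetric_complexified_eigenvalue_mem[OF A sym_A _ k(1)] r by blast
  then show ?thesis
    using k(2) by auto
qed

lemma symmetric_diag_square_le:
  fixes B :: "real mat"
  assumes B: "B \<in> carrier_mat n n" and sym_B: "B\<^sup>T = B" and i: "i < n"
  shows "(B $$ (i,i))\<^sup>2 \<le> (B * B) $$ (i,i)"
proof -
  have "B $$ (l,i) = B $$ (i,l)" if "l < n" for l
    using B i that by (metis carrier_matD index_transpose_mat(1) sym_B)
  then have "(B * B) $$ (i,i) = (\<Sum>l\<in>{0..<n}. (B $$ (i,l))\<^sup>2)"
    using B i by (auto simp: scalar_prod_def power2_eq_square intro!: sum.cong)
  moreover have "(B $$ (i,i))\<^sup>2 \<le> (\<Sum>l\<in>{0..<n}. (B $$ (i,l))\<^sup>2)"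
    using i by (intro member_le_sum) auto
  ultimately show ?thesis by simp
qed

lemma symmetric_abs_diag_pow_two_power:
  fixes A :: "real mat"
  assumes A: "A \<in> carrier_mat n n" and sym_A: "A\<^sup>T = A" and i: "i < n"
  shows "\<bar>A $$ (i,i)\<bar> ^ (2 ^ j) \<le> \<bar>(A ^\<^sub>m (2 ^ j)) $$ (i,i)\<bar>"
proof (induction j)
  case 0
  show ?case using A i by simp
next
  case (Suc j)
  define B where "B = A ^\<^sub>m (2 ^ j)"
  have B: "B \<in> carrier_mat n n" "B\<^sup>T = B"
    unfolding B_def using A sym_A by (auto simp: symmetric_pow_mat)
  have "\<bar>A $$ (i,i)\<bar> ^ (2 ^ Suc j) = (\<bar>A $$ (i,i)\<bar> ^ (2 ^ j))\<^sup>2"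
    by (simp only: power_Suc2 power_mult)
  also have "\<dots> \<le> \<bar>B $$ (i,i)\<bar>\<^sup>2"
    using Suc.IH unfolding B_def by (intro power_mono) auto
  also have "\<dots> = (B $$ (i,i))\<^sup>2"
    by simp
  also have "\<dots> \<le> (B * B) $$ (i,i)"
    using B i by (rule symmetric_diag_square_le)
  also have "B * B = A ^\<^sub>m (2 ^ j + 2 ^ j)"
    unfolding B_def using A by (simp add: pow_mat_add)
  finally show ?case
    by (simp add: mult_2)
qed

lemma abs_diag_le_1_if_spectral_radius_less_1:
  fixes A :: "real mat"
  assumes A: "A \<in> carrier_mat n n" and sym_A: "A\<^sup>T = A" and i: "i < n"
    and sr: "spectral_radius (map_mat complex_of_real A) < 1"
  shows "\<bar>A $$ (i,i)\<bar> \<le> 1"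
proof (rule ccontr)
  assume "\<not> ?thesis"
  then have gt: "1 < \<bar>A $$ (i,i)\<bar>" by simp
  obtain C where C: "\<forall>k. norm_bound (map_mat complex_of_real A ^\<^sub>m k) C"
    using spectral_radius_jnf_norm_bound_less_1_upper_triangular[OF _ sr] A by auto
  have bounded: "\<bar>A $$ (i,i)\<bar> ^ (2 ^ j) \<le> C" for j
  proof -
    have "norm ((map_mat complex_of_real A ^\<^sub>m (2 ^ j)) $$ (i,i)) \<le> C"
      using C A i unfolding norm_bound_def by simp
    also have "map_mat complex_of_real A ^\<^sub>m (2 ^ j) = map_mat complex_of_real (A ^\<^sub>m (2 ^ j))"
      by (rule of_real_hom.mat_hom_pow[OF A, symmetric])
    finally have "\<bar>(A ^\<^sub>m (2 ^ j)) $$ (i,i)\<bar> \<le> C"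
      using A i by simp
    then show ?thesis
      using symmetric_abs_diag_pow_two_power[OF A sym_A i, of j] by linarith
  qed
  obtain j where "C < \<bar>A $$ (i,i)\<bar> ^ j"
    using real_arch_pow[OF gt] by blast
  also have "\<dots> \<le> \<bar>A $$ (i,i)\<bar> ^ (2 ^ j)"
    using gt less_exp[of j] by (intro power_increasing) simp_all
  finally show False
    using bounded[of j] by simp
qed

lemma symmetric_abs_diag_le_spectral_radius:
  fixes A :: "real mat"
  assumes A: "A \<in> carrier_mat n n" and sym_A: "A\<^sup>T = A" and i: "i < n"
  shows "\<bar>A $$ (i,i)\<bar> \<le> spectral_radius (map_mat complex_of_real A)"
proof (rule ccontr)
  define \<rho> where "\<rho> = spectral_radius (map_mat complex_of_real A)"
  assume "\<not> ?thesis"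
  then have less: "\<rho> < \<bar>A $$ (i,i)\<bar>" unfolding \<rho>_def by simp
  have n: "n > 0" using i by simp
  have "0 \<le> \<rho>"
    using spectral_radius_attained[of "map_mat complex_of_real A" n] A n unfolding \<rho>_def by auto
  define t where "t = (\<rho> + \<bar>A $$ (i,i)\<bar>) / 2"
  have t: "0 < t" "\<rho> < t" "t < \<bar>A $$ (i,i)\<bar>"
    using less \<open>0 \<le> \<rho>\<close> unfolding t_def by auto
  have scaled: "map_mat complex_of_real ((1 / t) \<cdot>\<^sub>m A) = complex_of_real (1 / t) \<cdot>\<^sub>m map_mat complex_of_real A"
    by (rule eq_matI) auto
  have "spectral_radius (complex_of_real (1 / t) \<cdot>\<^sub>m map_mat complex_of_real A) \<le> cmod (complex_of_real (1 / t)) * \<rho>"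
    unfolding \<rho>_def using A t(1) by (intro spectral_radius_smult_le[OF _ n]) simp_all
  then have "spectral_radius (map_mat complex_of_real ((1 / t) \<cdot>\<^sub>m A)) \<le> \<rho> / t"
    unfolding scaled using t(1) by (simp add: norm_divide)
  also have "\<dots> < 1"
    using t by simp
  finally have sr: "spectral_radius (map_mat complex_of_real ((1 / t) \<cdot>\<^sub>m A)) < 1" .
  have "(1 / t) \<cdot>\<^sub>m A \<in> carrier_mat n n" "((1 / t) \<cdot>\<^sub>m A)\<^sup>T = (1 / t) \<cdot>\<^sub>m A"
    using A by (simp_all add: transpose_smult_mat sym_A)
  from abs_diag_le_1_if_spectral_radius_less_1[OF this i sr]
  have "\<bar>((1 / t) \<cdot>\<^sub>m A) $$ (i,i)\<bar> \<le> 1" .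
  moreover have "((1 / t) \<cdot>\<^sub>m A) $$ (i,i) = A $$ (i,i) / t"
    using A i by simp
  ultimately have "\<bar>A $$ (i,i)\<bar> / t \<le> 1"
    using t(1) by (simp add: abs_divide)
  then show False
    using t by (simp add: divide_le_eq)
qed

lemma eigenvalue_in_Gershgorin_disc:
  fixes A :: "'a::real_normed_field mat"
  assumes A: "A \<in> carrier_mat n n" and ev: "eigenvalue A k"
  shows "\<exists>i<n. norm (k - A $$ (i,i)) \<le> (\<Sum>j\<in>{0..<n} - {i}. norm (A $$ (i,j)))"
proof -
  obtain v where v: "v \<in> carrier_vec n" "v \<noteq> 0\<^sub>v n" "A *\<^sub>v v = k \<cdot>\<^sub>v v"
    using ev A unfolding eigenvalue_def eigenvector_def by auto
  have "n \<noteq> 0"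
    using v(1,2) by auto
  define m where "m = Max ((\<lambda>j. norm (v $ j)) ` {0..<n})"
  have "m \<in> (\<lambda>j. norm (v $ j)) ` {0..<n}"
    unfolding m_def using \<open>n \<noteq> 0\<close> by (intro Max_in) auto
  then obtain i where i: "i < n" and "norm (v $ i) = m"
    by auto
  then have max: "norm (v $ j) \<le> norm (v $ i)" if "j < n" for j
    using that unfolding m_def by simp
  obtain j where "j < n" "v $ j \<noteq> 0"
    using v(1,2) by (auto simp: vec_eq_iff)
  then have "norm (v $ i) > 0"
    using max by (meson less_le_trans zero_less_norm_iff)
  have "(k - A $$ (i,i)) * v $ i = (\<Sum>j\<in>{0..<n} - {i}. A $$ (i,j) * v $ j)"
  proof -
    have "k * v $ i = (\<Sum>j\<in>{0..<n}. A $$ (i,j) * v $ j)"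
      using arg_cong[OF v(3), of "\<lambda>w. w $ i"] A v(1) i by (simp add: scalar_prod_def)
    also have "\<dots> = A $$ (i,i) * v $ i + (\<Sum>j\<in>{0..<n} - {i}. A $$ (i,j) * v $ j)"
      using i by (simp add: sum.remove)
    finally show ?thesis by (simp add: algebra_simps)
  qed
  then have "norm (k - A $$ (i,i)) * norm (v $ i) = norm (\<Sum>j\<in>{0..<n} - {i}. A $$ (i,j) * v $ j)"
    by (simp flip: norm_mult)
  also have "\<dots> \<le> (\<Sum>j\<in>{0..<n} - {i}. norm (A $$ (i,j)) * norm (v $ i))"
    using max by (intro order.trans[OF norm_sum] sum_mono) (auto simp: norm_mult intro: mult_left_mono)
  finally show ?thesis
    using i \<open>norm (v $ i) > 0\<close> by (auto simp flip: sum_distrib_right)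
qed

lemma pos_def_eigenvalue_pos:
  fixes M :: "real mat"
  assumes M: "M \<in> carrier_mat n n"
    and pd: "\<forall>v \<in> carrier_vec n. v \<noteq> 0\<^sub>v n \<longrightarrow> v \<bullet> (M *\<^sub>v v) > 0"
    and ev: "eigenvalue M x"
  shows "0 < x"
proof -
  obtain v where v: "v \<in> carrier_vec n" "v \<noteq> 0\<^sub>v n" "M *\<^sub>v v = x \<cdot>\<^sub>v v"
    using ev M unfolding eigenvalue_def eigenvector_def by auto
  have "0 < v \<bullet> (M *\<^sub>v v)"
    using pd v by blast
  also have "\<dots> = x * (v \<bullet> v)"
    using v by simp
  finally show ?thesis
    using conjugate_square_greater_0_vec[OF v(1)] v(2) by (simp add: zero_less_mult_iff)
qed

lemma symmetric_pos_def_square_pos_def: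
  fixes M :: "real mat"
  assumes M: "M \<in> carrier_mat n n" and sym_M: "M\<^sup>T = M"
    and pd: "\<forall>v \<in> carrier_vec n. v \<noteq> 0\<^sub>v n \<longrightarrow> v \<bullet> (M *\<^sub>v v) > 0"
  shows "\<forall>v \<in> carrier_vec n. v \<noteq> 0\<^sub>v n \<longrightarrow> v \<bullet> ((M * M) *\<^sub>v v) > 0"
proof (intro ballI impI)
  fix v :: "real vec"
  assume v: "v \<in> carrier_vec n" "v \<noteq> 0\<^sub>v n"
  have Mv: "M *\<^sub>v v \<in> carrier_vec n" "M *\<^sub>v v \<noteq> 0\<^sub>v n"
    using M v pd by auto
  have "v \<bullet> ((M * M) *\<^sub>v v) = (M\<^sup>T *\<^sub>v v) \<bullet> (M *\<^sub>v v)"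
    using M v by (simp add: transpose_vec_mult_scalar)
  also have "\<dots> > 0"
    using conjugate_square_greater_0_vec[OF Mv(1)] Mv(2) by (simp add: sym_M)
  finally show "v \<bullet> ((M * M) *\<^sub>v v) > 0" .
qed

lemma pos_def_eigenvalue_ratio_le_cond_num:
  fixes M :: "real mat"
  assumes M: "M \<in> carrier_mat n n" and sym_M: "M\<^sup>T = M"
    and pd: "\<forall>v \<in> carrier_vec n. v \<noteq> 0\<^sub>v n \<longrightarrow> v \<bullet> (M *\<^sub>v v) > 0"
    and x: "eigenvalue M x" and y: "eigenvalue M y"
  shows "y / x \<le> cond_num M"
proof -
  define S where "S = singular_values M"
  have S: "S = sqrt ` {\<mu>. eigenvalue (M * M) \<mu>}"
    unfolding S_def singular_values_def sym_M ..
  have fin: "finite S"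
    using card_finite_spectrum(1)[of "M * M" n] M unfolding S spectrum_def by simp
  have pos: "s > 0" if "s \<in> S" for s
    using that pos_def_eigenvalue_pos[OF _ symmetric_pos_def_square_pos_def[OF M sym_M pd]] M
    unfolding S by auto
  have mem: "z \<in> S" if "eigenvalue M z" for z
  proof -
    have "z > 0"
      using pos_def_eigenvalue_pos[OF M pd that] .
    then show ?thesis
      using eigenvalue_square[OF M that] unfolding S by (auto intro!: image_eqI[of _ _ "z\<^sup>2"])
  qed
  have "S \<noteq> {}"
    using mem[OF x] by blast
  then have "0 < Min S" "Min S \<le> x" "y \<le> Max S"
    using fin mem[OF x] mem[OF y] pos[OF Min_in[OF fin]] by auto
  then have "y / x \<le> Max S / Min S"
    using pos_def_eigenvalue_pos[OF M pd x] pos_def_eigenvalue_pos[OF M pd y] by (intro frac_le) auto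
  then show ?thesis
    unfolding cond_num_def S_def .
qed

lemma pos_def_ex_eigenvalue_ge_diag:
  fixes M :: "real mat"
  assumes M: "M \<in> carrier_mat n n" and sym_M: "M\<^sup>T = M"
    and pd: "\<forall>v \<in> carrier_vec n. v \<noteq> 0\<^sub>v n \<longrightarrow> v \<bullet> (M *\<^sub>v v) > 0"
    and i: "i < n"
  shows "\<exists>x. eigenvalue M x \<and> M $$ (i,i) \<le> x"
proof -
  obtain k where k: "eigenvalue (map_mat complex_of_real M) k"
    "spectral_radius (map_mat complex_of_real M) = cmod k"
    using spectral_radius_attained[of "map_mat complex_of_real M" n] M i by auto
  obtain x where x: "eigenvalue M x" and kx: "k = complex_of_real x"
    using symmetric_complexified_eigenvalue_mem[OF M sym_M _ k(1), of "Collect (eigenvalue M)"] by auto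
  have "M $$ (i,i) \<le> spectral_radius (map_mat complex_of_real M)"
    using symmetric_abs_diag_le_spectral_radius[OF M sym_M i] by linarith
  also have "\<dots> = x"
    using k(2) kx pos_def_eigenvalue_pos[OF M pd x] by simp
  finally show ?thesis
    using x by blast
qed

lemma Max_diag_mat:
  fixes A :: "'a::linorder mat"
  assumes "n > 0"
  shows "\<forall>i<n. A $$ (i,i) \<le> Max {A $$ (i,i) | i. i < n}"
    and "\<exists>i<n. A $$ (i,i) = Max {A $$ (i,i) | i. i < n}"
proof -
  have eq: "{A $$ (i,i) | i. i < n} = (\<lambda>i. A $$ (i,i)) ` {..<n}"
    by auto
  show "\<forall>i<n. A $$ (i,i) \<le> Max {A $$ (i,i) | i. i < n}"
    unfolding eq by simp
  show "\<exists>i<n. A $$ (i,i) = Max {A $$ (i,i) | i. i < n}"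
  proof -
    have "Max ((\<lambda>i. A $$ (i,i)) ` {..<n}) \<in> (\<lambda>i. A $$ (i,i)) ` {..<n}"
      using assms by (intro Max_in) auto
    then show ?thesis
      unfolding eq by force
  qed
qed

lemma SDDM_diag_pos:
  assumes "SDDM n M" and "i < n"
  shows "0 < M $$ (i,i)"
  using assms sum_nonneg[of "{0..<n} - {i}" "\<lambda>j. \<bar>M $$ (i,j)\<bar>"]
  unfolding SDDM_def by fastforce

lemma SDDM_eigenvalue_less_twice_diag:
  assumes S: "SDDM n M" and ev: "eigenvalue M x"
  shows "\<exists>i<n. x < 2 * M $$ (i,i)"
proof -
  have M: "M \<in> carrier_mat n n"
    using S unfolding SDDM_def by blast
  obtain i where i: "i < n" and "\<bar>x - M $$ (i,i)\<bar> \<le> (\<Sum>j\<in>{0..<n} - {i}. \<bar>M $$ (i,j)\<bar>)"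
    using eigenvalue_in_Gershgorin_disc[OF M ev] by auto
  moreover have "(\<Sum>j\<in>{0..<n} - {i}. \<bar>M $$ (i,j)\<bar>) < M $$ (i,i)"
    using S i unfolding SDDM_def by blast
  ultimately show ?thesis
    using i by auto
qed

lemma SDDM_smult_eigenvalue_bounds:
  assumes n: "n > 0" and S: "SDDM n M" and \<kappa>: "2 \<le> \<kappa>" "cond_num M \<le> \<kappa>"
    and c: "c = (1 - 1 / \<kappa>) / Max {M $$ (i,i) | i. i < n}"
    and ev: "eigenvalue (c \<cdot>\<^sub>m M) \<mu>"
  shows "\<mu> \<in> {1 / (2 * \<kappa>) .. 2 - 1 / (2 * \<kappa>)}"
proof -
  define d where "d = Max {M $$ (i,i) | i. i < n}"
  have M: "M \<in> carrier_mat n n" and sym_M: "M\<^sup>T = M"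
    and pd: "\<forall>v \<in> carrier_vec n. v \<noteq> 0\<^sub>v n \<longrightarrow> v \<bullet> (M *\<^sub>v v) > 0"
    using S unfolding SDDM_def by auto
  obtain i0 where i0: "i0 < n" "M $$ (i0,i0) = d"
    using Max_diag_mat(2)[OF n, of M] unfolding d_def by blast
  have d: "0 < d"
    using SDDM_diag_pos[OF S i0(1)] i0(2) by simp
  have c_pos: "0 < c"
    unfolding c d_def[symmetric] using d \<kappa>(1) by simp
  define x where "x = \<mu> / c"
  have \<mu>: "\<mu> = c * x"
    unfolding x_def using c_pos by simp
  have ev_x: "eigenvalue M x"
    using ev eigenvalue_smult_mat_iff[OF M] c_pos unfolding x_def by simp
  have x: "0 < x"
    using pos_def_eigenvalue_pos[OF M pd ev_x] .
  obtain y where y: "eigenvalue M y" "d \<le> y"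
    using pos_def_ex_eigenvalue_ge_diag[OF M sym_M pd i0(1)] i0(2) by auto
  have "d / x \<le> y / x"
    using y(2) x by (simp add: divide_right_mono)
  also have "\<dots> \<le> \<kappa>"
    using pos_def_eigenvalue_ratio_le_cond_num[OF M sym_M pd ev_x y(1)] \<kappa>(2) by linarith
  finally have "d \<le> \<kappa> * x"
    using x by (simp add: divide_le_eq)
  also have "\<dots> \<le> 2 * (\<kappa> - 1) * x"
    using \<kappa>(1) x by (intro mult_right_mono) auto
  finally have lower: "d \<le> 2 * (\<kappa> - 1) * x" .
  obtain i where "i < n" "x < 2 * M $$ (i,i)"
    using SDDM_eigenvalue_less_twice_diag[OF S ev_x] by blast
  then have upper: "x < 2 * d"
    using Max_diag_mat(1)[OF n, of M] unfolding d_def by fastforce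
  have cx: "c * x = (\<kappa> - 1) * x / (\<kappa> * d)"
    unfolding c d_def[symmetric] using \<kappa>(1) by (simp add: field_simps)
  have "1 / (2 * \<kappa>) \<le> c * x"
    unfolding cx using lower d \<kappa>(1) by (simp add: field_simps)
  moreover have "c * x \<le> c * (2 * d)"
    using upper c_pos by simp
  moreover have "c * (2 * d) = 2 - 2 / \<kappa>"
    unfolding c d_def[symmetric] using d by (simp add: field_simps)
  moreover have "2 - 2 / \<kappa> \<le> 2 - 1 / (2 * \<kappa>)"
    using \<kappa>(1) by (simp add: field_simps)
  ultimately show ?thesis
    unfolding \<mu> by simp
qed

lemma SDDM_one_minus_smult_nonneg:
  assumes n: "n > 0" and S: "SDDM n M" and c: "0 \<le> c" "c * Max {M $$ (i,i) | i. i < n} \<le> 1"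
    and ij: "i < n" "j < n"
  shows "0 \<le> (1\<^sub>m n - c \<cdot>\<^sub>m M) $$ (i,j)"
proof (cases "i = j")
  case True
  have "c * M $$ (i,i) \<le> c * Max {M $$ (i,i) | i. i < n}"
    using Max_diag_mat(1)[OF n, of M] ij c(1) by (simp add: mult_left_mono)
  then show ?thesis
    using True S ij c(2) unfolding SDDM_def by auto
next
  case False
  then show ?thesis
    using S ij c(1) unfolding SDDM_def by (auto simp: mult_nonneg_nonpos)
qed

theorem mainTheorem3:
  fixes n :: nat and M D A X :: "real mat" and \<kappa> c :: real
  assumes "n > 0" and "SDDM n M"
  defines "D \<equiv> mat n n (\<lambda>(i,j). if i = j then M $$ (i,i) else 0)"
    and "A \<equiv> D - M"
    and "\<kappa> \<equiv> max 2 (cond_num (D - A))"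
    and "c \<equiv> (1 - 1 / \<kappa>) / Max {M $$ (i,i) | i. i < n}"
    and "X \<equiv> 1\<^sub>m n - c \<cdot>\<^sub>m (D - A)"
  shows "(\<forall>k. eigenvalue (map_mat complex_of_real (c \<cdot>\<^sub>m (D - A))) k \<longrightarrow>
            k \<in> complex_of_real ` {1 / (2 * \<kappa>) .. 2 - 1 / (2 * \<kappa>)})
      \<and> (\<forall>i<n. \<forall>j<n. X $$ (i,j) \<ge> 0)
      \<and> spectral_radius (map_mat complex_of_real X) \<le> 1 - 1 / (2 * \<kappa>)"
proof -
  have M: "M \<in> carrier_mat n n" and sym_M: "M\<^sup>T = M"
    using \<open>SDDM n M\<close> unfolding SDDM_def by auto
  have DA: "D - A = M"
    unfolding A_def D_def using M by (intro eq_matI) auto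
  have \<kappa>: "2 \<le> \<kappa>" "cond_num M \<le> \<kappa>"
    unfolding \<kappa>_def DA by auto
  note bounds = SDDM_smult_eigenvalue_bounds[OF \<open>n > 0\<close> \<open>SDDM n M\<close> \<kappa> c_def[THEN meta_eq_to_obj_eq]]
  have cM: "c \<cdot>\<^sub>m M \<in> carrier_mat n n" "(c \<cdot>\<^sub>m M)\<^sup>T = c \<cdot>\<^sub>m M"
    using M by (simp_all add: transpose_smult_mat sym_M)
  have X: "X = 1\<^sub>m n - c \<cdot>\<^sub>m M" "X \<in> carrier_mat n n" "X\<^sup>T = X"
    unfolding X_def DA using cM by (auto simp: transpose_minus[OF one_carrier_mat cM(1)] intro: minus_carrier_mat)
  have "0 < Max {M $$ (i,i) | i. i < n}"
    using Max_diag_mat(1)[OF \<open>n > 0\<close>, of M] SDDM_diag_pos[OF \<open>SDDM n M\<close> \<open>n > 0\<close>] \<open>n > 0\<close>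
    by (meson less_le_trans)
  then have "0 \<le> c" "c * Max {M $$ (i,i) | i. i < n} \<le> 1"
    unfolding c_def using \<kappa>(1) by (simp_all add: field_simps)
  then have "\<forall>i<n. \<forall>j<n. X $$ (i,j) \<ge> 0"
    unfolding X(1) using SDDM_one_minus_smult_nonneg[OF \<open>n > 0\<close> \<open>SDDM n M\<close>] by blast
  moreover have "\<bar>\<mu>\<bar> \<le> 1 - 1 / (2 * \<kappa>)" if "eigenvalue X \<mu>" for \<mu>
    using bounds[of "1 - \<mu>"] that eigenvalue_one_minus_mat_iff[OF cM(1)] X(1) by auto
  then have "spectral_radius (map_mat complex_of_real X) \<le> 1 - 1 / (2 * \<kappa>)"
    using symmetric_spectral_radius_le[OF X(2,3) \<open>n > 0\<close>] by blast
  moreover have "k \<in> complex_of_real ` {1 / (2 * \<kappa>) .. 2 - 1 / (2 * \<kappa>)}"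
    if "eigenvalue (map_mat complex_of_real (c \<cdot>\<^sub>m (D - A))) k" for k
    using symmetric_complexified_eigenvalue_mem[OF cM bounds] that unfolding DA by blast
  ultimately show ?thesis
    by blast
qed

end
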